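(* Let $(\mathscr C,A,\psi)$ be an entwining structure with $A$ finite dimensional over $K$, and suppose there exists a normalized cointegral $\gamma=\{\gamma_X:A^*\otimes\mathscr C(X,X)\to A\}_{X\in Ob(\mathscr C)}$ on $(\mathscr C,A,\psi)$. Then a morphism $\phi:\mathcal M\to\mathcal M'$ in $Com^{\mathscr C}_A(\psi)$ has a section (resp. a retraction) in $Com^{\mathscr C}_A(\psi)$ if and only if it has a section (resp. a retraction) in $Com^{\mathscr C}$.
   Context: $K$ is a field. A $K$-coalgebra with several objects $\mathscr C$: a set $Ob(\mathscr C)$, vector spaces $\mathscr C(X,Y)$, linear comultiplications $\delta_{XYZ}:\mathscr C(X,Z)\to\mathscr C(Y,Z)\otimes\mathscr C(X,Y)$ and counits $\epsilon_X:\mathscr C(X,X)\to K$, with $(\delta_{YWZ}\otimes\mathrm{id})\delta_{XYZ}=(\mathrm{id}\otimes\delta_{XYW})\delta_{XWZ}$ and $(\epsilon_Y\otimes\mathrm{id})\delta_{XYY}=\mathrm{id}=(\mathrm{id}\otimes\epsilon_X)\delta_{XXY}$. For a $K$-algebra $A$ (multiplication $\mu_A$, unit $u_A$), an entwining structure $(\mathscr C,A,\psi)$ is a family of linear maps $\psi_{XY}:\mathscr C(X,Y)\otimes A\to A\otimes\mathscr C(X,Y)$, $\psi_{XY}(f\otimes a)=a_\psi\otimes f^\psi$, with (i) $(\mathrm{id}_A\otimes\delta_{XYZ})\psi_{XZ}=(\psi_{YZ}\otimes\mathrm{id})(\mathrm{id}\otimes\psi_{XY})(\delta_{XYZ}\otimes\mathrm{id}_A)$;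 (ii) $\psi_{XZ}(\mathrm{id}\otimes\mu_A)=(\mu_A\otimes\mathrm{id})(\mathrm{id}_A\otimes\psi_{XZ})(\psi_{XZ}\otimes\mathrm{id}_A)$; (iii) $\psi_{XZ}(f\otimes1)=1\otimes f$; (iv) $\epsilon_Z(g^\psi)a_\psi=\epsilon_Z(g)a$. $Com^{\mathscr C}$: right $\mathscr C$-comodules (spaces $\mathcal M(X)$, coactions $\rho_{XY}(m)=m_{Y0}\otimes m_{Y1}\in\mathcal M(Y)\otimes\mathscr C(X,Y)$ with $(\rho_{ZY}\otimes\mathrm{id})\rho_{XZ}=(\mathrm{id}\otimes\delta_{XZY})\rho_{XY}$, $(\mathrm{id}\otimes\epsilon_X)\rho_{XX}=\mathrm{id}$) with coaction-compatible morphisms. $Com^{\mathscr C}_A(\psi)$: comodules with right $A$-module structures on each $\mathcal M(X)$ such that $\rho_{XY}(ma)=m_{Y0}a_\psi\otimes(m_{Y1})^\psi$, with $A$-linear comodule morphisms. $coev_A:K\to A\otimes A^*$, $1\mapsto\sum_ia_i\otimes a_i^*$ (basis and dual basis). A normalized cointegral is a family of linear maps $\gamma_X:A^*\otimes\mathscr C(X,X)\to A$ with: (1) $(\mathrm{id}_A\otimes\psi_{XY})(\psi_{XY}\otimes\gamma_X)(\mathrm{id}\otimes coev_A\otimes\mathrm{id})\delta_{XXY}=(\mathrm{id}_A\otimes\gamma_Y\otimes\mathrm{id})(coev_A\otimes\delta_{XYY})$ as maps $\mathscr C(X,Y)\to A\otimes A\otimes\mathscr C(X,Y)$; (2) $(\mathrm{id}_A\otimes\mu_A)(\mathrm{id}_A\otimes\gamma_X\otimes\mathrm{id}_A)(coev_A\otimes\mathrm{id}\otimes\mathrm{id}_A)=(\mu_A\otimes\gamma_X)(\mathrm{id}_A\otimes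 coev_A\otimes\mathrm{id})\psi_{XX}$ as maps $\mathscr C(X,X)\otimes A\to A\otimes A$; (3) $\mu_A(\mathrm{id}_A\otimes\gamma_X)(coev_A\otimes\mathrm{id})=u_A\circ\epsilon_X$ on $\mathscr C(X,X)$. *)

theory Defs
  imports Main "HOL-Library.Poly_Mapping"
begin

text \<open>A K-vector space is encoded through a chosen basis: a basis set S of some
type 'b, the space being the finitely supported functions 'b =>0 K whose support
lies in S.  A linear map is encoded by its values on basis vectors (function
'b => ('c =>0 K)), extended linearly by app.  The tensor product of spaces with
bases S and T is the space with basis S x T; the ground field K is the space with
basis the unit type.\<close>

definition sm :: "'k::field \<Rightarrow> ('b \<Rightarrow>\<^sub>0 'k) \<Rightarrow> ('b \<Rightarrow>\<^sub>0 'k)" where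
  "sm c v = Poly_Mapping.map (\<lambda>x. c * x) v"

definition app :: "('b \<Rightarrow> ('c \<Rightarrow>\<^sub>0 'k::field)) \<Rightarrow> ('b \<Rightarrow>\<^sub>0 'k) \<Rightarrow> ('c \<Rightarrow>\<^sub>0 'k)" where
  "app f v = (\<Sum>b\<in>Poly_Mapping.keys v. sm (Poly_Mapping.lookup v b) (f b))"

definition cmp :: "('c \<Rightarrow> ('d \<Rightarrow>\<^sub>0 'k::field)) \<Rightarrow> ('b \<Rightarrow> ('c \<Rightarrow>\<^sub>0 'k)) \<Rightarrow> ('b \<Rightarrow> ('d \<Rightarrow>\<^sub>0 'k))"
  (infixr "\<odot>" 55) where
  "g \<odot> f = (\<lambda>b. app g (f b))"

definition idm :: "'b \<Rightarrow> ('b \<Rightarrow>\<^sub>0 'k::field)" where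
  "idm = (\<lambda>b. Poly_Mapping.single b 1)"

definition bmap :: "('b \<Rightarrow> 'c) \<Rightarrow> 'b \<Rightarrow> ('c \<Rightarrow>\<^sub>0 'k::field)" where
  "bmap p = (\<lambda>b. Poly_Mapping.single (p b) 1)"

definition tv :: "('a \<Rightarrow>\<^sub>0 'k::field) \<Rightarrow> ('b \<Rightarrow>\<^sub>0 'k) \<Rightarrow> ('a \<times> 'b \<Rightarrow>\<^sub>0 'k)" where
  "tv v w = (\<Sum>a\<in>Poly_Mapping.keys v. \<Sum>b\<in>Poly_Mapping.keys w. Poly_Mapping.single (a, b) (Poly_Mapping.lookup v a * Poly_Mapping.lookup w b))"

definition tm :: "('a \<Rightarrow> ('c \<Rightarrow>\<^sub>0 'k::field)) \<Rightarrow> ('b \<Rightarrow> ('d \<Rightarrow>\<^sub>0 'k)) \<Rightarrow> ('a \<times> 'b \<Rightarrow> ('c \<times> 'd \<Rightarrow>\<^sub>0 'k))" where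
  "tm f g = (\<lambda>(a, b). tv (f a) (g b))"

abbreviation assoc_lr :: "('a \<times> 'b) \<times> 'c \<Rightarrow> ('a \<times> ('b \<times> 'c) \<Rightarrow>\<^sub>0 'k::field)" where
  "assoc_lr \<equiv> bmap (\<lambda>((a, b), c). (a, (b, c)))"
abbreviation assoc_rl :: "'a \<times> ('b \<times> 'c) \<Rightarrow> (('a \<times> 'b) \<times> 'c \<Rightarrow>\<^sub>0 'k::field)" where
  "assoc_rl \<equiv> bmap (\<lambda>(a, (b, c)). ((a, b), c))"
abbreviation lunit :: "unit \<times> 'b \<Rightarrow> ('b \<Rightarrow>\<^sub>0 'k::field)" where
  "lunit \<equiv> bmap snd"
abbreviation runit :: "'b \<times> unit \<Rightarrow> ('b \<Rightarrow>\<^sub>0 'k::field)" where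
  "runit \<equiv> bmap fst"
abbreviation lunit_inv :: "'b \<Rightarrow> (unit \<times> 'b \<Rightarrow>\<^sub>0 'k::field)" where
  "lunit_inv \<equiv> bmap (\<lambda>b. ((), b))"
abbreviation runit_inv :: "'b \<Rightarrow> ('b \<times> unit \<Rightarrow>\<^sub>0 'k::field)" where
  "runit_inv \<equiv> bmap (\<lambda>b. (b, ()))"

definition maps_to :: "'b set \<Rightarrow> 'c set \<Rightarrow> ('b \<Rightarrow> ('c \<Rightarrow>\<^sub>0 'k::field)) \<Rightarrow> bool" where
  "maps_to S T f \<longleftrightarrow> (\<forall>b\<in>S. Poly_Mapping.keys (f b) \<subseteq> T)"

definition eq_on :: "'b set \<Rightarrow> ('b \<Rightarrow> ('c \<Rightarrow>\<^sub>0 'k::field)) \<Rightarrow> ('b \<Rightarrow> ('c \<Rightarrow>\<^sub>0 'k)) \<Rightarrow> bool" where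
  "eq_on S f g \<longleftrightarrow> (\<forall>b\<in>S. f b = g b)"

text \<open>Ob: set of objects; B X Y: basis of C(X,Y); dl X Y Z = delta_XYZ :
C(X,Z) -> C(Y,Z) (x) C(X,Y); ep X = epsilon_X : C(X,X) -> K.\<close>
definition coalg_several ::
  "'o set \<Rightarrow> ('o \<Rightarrow> 'o \<Rightarrow> 'c set) \<Rightarrow> ('o \<Rightarrow> 'o \<Rightarrow> 'o \<Rightarrow> 'c \<Rightarrow> ('c \<times> 'c \<Rightarrow>\<^sub>0 'k::field))
    \<Rightarrow> ('o \<Rightarrow> 'c \<Rightarrow> (unit \<Rightarrow>\<^sub>0 'k)) \<Rightarrow> bool" where
  "coalg_several Ob B dl ep \<longleftrightarrow>
     (\<forall>X\<in>Ob. \<forall>Y\<in>Ob. \<forall>Z\<in>Ob. maps_to (B X Z) (B Y Z \<times> B X Y) (dl X Y Z)) \<and>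
     (\<forall>X\<in>Ob. \<forall>Y\<in>Ob. \<forall>Z\<in>Ob. \<forall>W\<in>Ob.
        eq_on (B X Z) (tm (dl Y W Z) idm \<odot> dl X Y Z)
                      (assoc_rl \<odot> tm idm (dl X Y W) \<odot> dl X W Z)) \<and>
     (\<forall>X\<in>Ob. \<forall>Y\<in>Ob. eq_on (B X Y) (lunit \<odot> tm (ep Y) idm \<odot> dl X Y Y) idm) \<and>
     (\<forall>X\<in>Ob. \<forall>Y\<in>Ob. eq_on (B X Y) (runit \<odot> tm idm (ep X) \<odot> dl X X Y) idm)"

definition k_algebra ::
  "'a set \<Rightarrow> ('a \<times> 'a \<Rightarrow> ('a \<Rightarrow>\<^sub>0 'k::field)) \<Rightarrow> (unit \<Rightarrow> ('a \<Rightarrow>\<^sub>0 'k)) \<Rightarrow> bool" where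
  "k_algebra BA mu u \<longleftrightarrow>
     maps_to (BA \<times> BA) BA mu \<and> maps_to UNIV BA u \<and>
     eq_on ((BA \<times> BA) \<times> BA) (mu \<odot> tm mu idm) (mu \<odot> tm idm mu \<odot> assoc_lr) \<and>
     eq_on (UNIV \<times> BA) (mu \<odot> tm u idm) lunit \<and>
     eq_on (BA \<times> UNIV) (mu \<odot> tm idm u) runit"

text \<open>coev_A : K -> A (x) A*, 1 |-> sum_i a_i (x) a_i^*; the dual space A* is
encoded via the dual basis, indexed by the same basis set BA.\<close>
definition coev :: "'a set \<Rightarrow> unit \<Rightarrow> ('a \<times> 'a \<Rightarrow>\<^sub>0 'k::field)" where
  "coev BA = (\<lambda>_. \<Sum>a\<in>BA. Poly_Mapping.single (a, a) 1)"

definition entwining ::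
  "'o set \<Rightarrow> ('o \<Rightarrow> 'o \<Rightarrow> 'c set) \<Rightarrow> ('o \<Rightarrow> 'o \<Rightarrow> 'o \<Rightarrow> 'c \<Rightarrow> ('c \<times> 'c \<Rightarrow>\<^sub>0 'k::field))
    \<Rightarrow> ('o \<Rightarrow> 'c \<Rightarrow> (unit \<Rightarrow>\<^sub>0 'k))
    \<Rightarrow> 'a set \<Rightarrow> ('a \<times> 'a \<Rightarrow> ('a \<Rightarrow>\<^sub>0 'k)) \<Rightarrow> (unit \<Rightarrow> ('a \<Rightarrow>\<^sub>0 'k))
    \<Rightarrow> ('o \<Rightarrow> 'o \<Rightarrow> 'c \<times> 'a \<Rightarrow> ('a \<times> 'c \<Rightarrow>\<^sub>0 'k)) \<Rightarrow> bool" where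
  "entwining Ob B dl ep BA mu u psi \<longleftrightarrow>
     coalg_several Ob B dl ep \<and> k_algebra BA mu u \<and>
     (\<forall>X\<in>Ob. \<forall>Y\<in>Ob. maps_to (B X Y \<times> BA) (BA \<times> B X Y) (psi X Y)) \<and>
     \<comment> \<open>(i)\<close>
     (\<forall>X\<in>Ob. \<forall>Y\<in>Ob. \<forall>Z\<in>Ob.
        eq_on (B X Z \<times> BA) (tm idm (dl X Y Z) \<odot> psi X Z)
          (assoc_lr \<odot> tm (psi Y Z) idm \<odot> assoc_rl \<odot> tm idm (psi X Y) \<odot> assoc_lr
             \<odot> tm (dl X Y Z) idm)) \<and>
     \<comment> \<open>(ii)\<close>
     (\<forall>X\<in>Ob. \<forall>Z\<in>Ob.
        eq_on (B X Z \<times> (BA \<times> BA)) (psi X Z \<odot> tm idm mu)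
          (tm mu idm \<odot> assoc_rl \<odot> tm idm (psi X Z) \<odot> assoc_lr \<odot> tm (psi X Z) idm \<odot> assoc_rl)) \<and>
     \<comment> \<open>(iii)\<close>
     (\<forall>X\<in>Ob. \<forall>Z\<in>Ob.
        eq_on (B X Z) (psi X Z \<odot> tm idm u \<odot> runit_inv) (tm u idm \<odot> lunit_inv)) \<and>
     \<comment> \<open>(iv)\<close>
     (\<forall>Z\<in>Ob.
        eq_on (B Z Z \<times> BA) (runit \<odot> tm idm (ep Z) \<odot> psi Z Z) (lunit \<odot> tm (ep Z) idm))"

definition comodule ::
  "'o set \<Rightarrow> ('o \<Rightarrow> 'o \<Rightarrow> 'c set) \<Rightarrow> ('o \<Rightarrow> 'o \<Rightarrow> 'o \<Rightarrow> 'c \<Rightarrow> ('c \<times> 'c \<Rightarrow>\<^sub>0 'k::field))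
    \<Rightarrow> ('o \<Rightarrow> 'c \<Rightarrow> (unit \<Rightarrow>\<^sub>0 'k))
    \<Rightarrow> ('o \<Rightarrow> 'm set) \<Rightarrow> ('o \<Rightarrow> 'o \<Rightarrow> 'm \<Rightarrow> ('m \<times> 'c \<Rightarrow>\<^sub>0 'k)) \<Rightarrow> bool" where
  "comodule Ob B dl ep BM rho \<longleftrightarrow>
     (\<forall>X\<in>Ob. \<forall>Y\<in>Ob. maps_to (BM X) (BM Y \<times> B X Y) (rho X Y)) \<and>
     (\<forall>X\<in>Ob. \<forall>Y\<in>Ob. \<forall>Z\<in>Ob.
        eq_on (BM X) (tm (rho Z Y) idm \<odot> rho X Z) (assoc_rl \<odot> tm idm (dl X Z Y) \<odot> rho X Y)) \<and>
     (\<forall>X\<in>Ob. eq_on (BM X) (runit \<odot> tm idm (ep X) \<odot> rho X X) idm)"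

definition entwined_module ::
  "'o set \<Rightarrow> ('o \<Rightarrow> 'o \<Rightarrow> 'c set) \<Rightarrow> ('o \<Rightarrow> 'o \<Rightarrow> 'o \<Rightarrow> 'c \<Rightarrow> ('c \<times> 'c \<Rightarrow>\<^sub>0 'k::field))
    \<Rightarrow> ('o \<Rightarrow> 'c \<Rightarrow> (unit \<Rightarrow>\<^sub>0 'k))
    \<Rightarrow> 'a set \<Rightarrow> ('a \<times> 'a \<Rightarrow> ('a \<Rightarrow>\<^sub>0 'k)) \<Rightarrow> (unit \<Rightarrow> ('a \<Rightarrow>\<^sub>0 'k))
    \<Rightarrow> ('o \<Rightarrow> 'o \<Rightarrow> 'c \<times> 'a \<Rightarrow> ('a \<times> 'c \<Rightarrow>\<^sub>0 'k))
    \<Rightarrow> ('o \<Rightarrow> 'm set) \<Rightarrow> ('o \<Rightarrow> 'o \<Rightarrow> 'm \<Rightarrow> ('m \<times> 'c \<Rightarrow>\<^sub>0 'k))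
    \<Rightarrow> ('o \<Rightarrow> 'm \<times> 'a \<Rightarrow> ('m \<Rightarrow>\<^sub>0 'k)) \<Rightarrow> bool" where
  "entwined_module Ob B dl ep BA mu u psi BM rho act \<longleftrightarrow>
     comodule Ob B dl ep BM rho \<and>
     (\<forall>X\<in>Ob. maps_to (BM X \<times> BA) (BM X) (act X)) \<and>
     (\<forall>X\<in>Ob. eq_on ((BM X \<times> BA) \<times> BA) (act X \<odot> tm (act X) idm)
                                            (act X \<odot> tm idm mu \<odot> assoc_lr)) \<and>
     (\<forall>X\<in>Ob. eq_on (BM X) (act X \<odot> tm idm u \<odot> runit_inv) idm) \<and>
     (\<forall>X\<in>Ob. \<forall>Y\<in>Ob.
        eq_on (BM X \<times> BA) (rho X Y \<odot> act X)
          (tm (act Y) idm \<odot> assoc_rl \<odot> tm idm (psi X Y) \<odot> assoc_lr \<odot> tm (rho X Y) idm))"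

definition comodule_mor ::
  "'o set \<Rightarrow> ('o \<Rightarrow> 'o \<Rightarrow> 'c set)
    \<Rightarrow> ('o \<Rightarrow> 'm set) \<Rightarrow> ('o \<Rightarrow> 'o \<Rightarrow> 'm \<Rightarrow> ('m \<times> 'c \<Rightarrow>\<^sub>0 'k::field))
    \<Rightarrow> ('o \<Rightarrow> 'n set) \<Rightarrow> ('o \<Rightarrow> 'o \<Rightarrow> 'n \<Rightarrow> ('n \<times> 'c \<Rightarrow>\<^sub>0 'k))
    \<Rightarrow> ('o \<Rightarrow> 'm \<Rightarrow> ('n \<Rightarrow>\<^sub>0 'k)) \<Rightarrow> bool" where
  "comodule_mor Ob B BM rho BN rho' phi \<longleftrightarrow>
     (\<forall>X\<in>Ob. maps_to (BM X) (BN X) (phi X)) \<and>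
     (\<forall>X\<in>Ob. \<forall>Y\<in>Ob. eq_on (BM X) (tm (phi Y) idm \<odot> rho X Y) (rho' X Y \<odot> phi X))"

definition entwined_mor ::
  "'o set \<Rightarrow> ('o \<Rightarrow> 'o \<Rightarrow> 'c set) \<Rightarrow> 'a set
    \<Rightarrow> ('o \<Rightarrow> 'm set) \<Rightarrow> ('o \<Rightarrow> 'o \<Rightarrow> 'm \<Rightarrow> ('m \<times> 'c \<Rightarrow>\<^sub>0 'k::field)) \<Rightarrow> ('o \<Rightarrow> 'm \<times> 'a \<Rightarrow> ('m \<Rightarrow>\<^sub>0 'k))
    \<Rightarrow> ('o \<Rightarrow> 'n set) \<Rightarrow> ('o \<Rightarrow> 'o \<Rightarrow> 'n \<Rightarrow> ('n \<times> 'c \<Rightarrow>\<^sub>0 'k)) \<Rightarrow> ('o \<Rightarrow> 'n \<times> 'a \<Rightarrow> ('n \<Rightarrow>\<^sub>0 'k))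
    \<Rightarrow> ('o \<Rightarrow> 'm \<Rightarrow> ('n \<Rightarrow>\<^sub>0 'k)) \<Rightarrow> bool" where
  "entwined_mor Ob B BA BM rho act BN rho' act' phi \<longleftrightarrow>
     comodule_mor Ob B BM rho BN rho' phi \<and>
     (\<forall>X\<in>Ob. eq_on (BM X \<times> BA) (phi X \<odot> act X) (act' X \<odot> tm (phi X) idm))"

definition is_section_of ::
  "'o set \<Rightarrow> ('o \<Rightarrow> 'n set) \<Rightarrow> ('o \<Rightarrow> 'n \<Rightarrow> ('m \<Rightarrow>\<^sub>0 'k::field)) \<Rightarrow> ('o \<Rightarrow> 'm \<Rightarrow> ('n \<Rightarrow>\<^sub>0 'k)) \<Rightarrow> bool" where
  "is_section_of Ob BN sigma phi \<longleftrightarrow> (\<forall>X\<in>Ob. eq_on (BN X) (phi X \<odot> sigma X) idm)"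

definition is_retraction_of ::
  "'o set \<Rightarrow> ('o \<Rightarrow> 'm set) \<Rightarrow> ('o \<Rightarrow> 'n \<Rightarrow> ('m \<Rightarrow>\<^sub>0 'k::field)) \<Rightarrow> ('o \<Rightarrow> 'm \<Rightarrow> ('n \<Rightarrow>\<^sub>0 'k)) \<Rightarrow> bool" where
  "is_retraction_of Ob BM rho phi \<longleftrightarrow> (\<forall>X\<in>Ob. eq_on (BM X) (rho X \<odot> phi X) idm)"

text \<open>gm X = gamma_X : A* (x) C(X,X) -> A\<close>
definition normalized_cointegral ::
  "'o set \<Rightarrow> ('o \<Rightarrow> 'o \<Rightarrow> 'c set) \<Rightarrow> ('o \<Rightarrow> 'o \<Rightarrow> 'o \<Rightarrow> 'c \<Rightarrow> ('c \<times> 'c \<Rightarrow>\<^sub>0 'k::field))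
    \<Rightarrow> ('o \<Rightarrow> 'c \<Rightarrow> (unit \<Rightarrow>\<^sub>0 'k))
    \<Rightarrow> 'a set \<Rightarrow> ('a \<times> 'a \<Rightarrow> ('a \<Rightarrow>\<^sub>0 'k)) \<Rightarrow> (unit \<Rightarrow> ('a \<Rightarrow>\<^sub>0 'k))
    \<Rightarrow> ('o \<Rightarrow> 'o \<Rightarrow> 'c \<times> 'a \<Rightarrow> ('a \<times> 'c \<Rightarrow>\<^sub>0 'k))
    \<Rightarrow> ('o \<Rightarrow> 'a \<times> 'c \<Rightarrow> ('a \<Rightarrow>\<^sub>0 'k)) \<Rightarrow> bool" where
  "normalized_cointegral Ob B dl ep BA mu u psi gm \<longleftrightarrow>
     (\<forall>X\<in>Ob. maps_to (BA \<times> B X X) BA (gm X)) \<and>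
     \<comment> \<open>(1)\<close>
     (\<forall>X\<in>Ob. \<forall>Y\<in>Ob.
        eq_on (B X Y)
          (tm idm (psi X Y) \<odot> bmap (\<lambda>((a, c), b). (a, (c, b))) \<odot> tm (psi X Y) (gm X)
             \<odot> bmap (\<lambda>((c, (a, b)), d). ((c, a), (b, d)))
             \<odot> tm (tm idm (coev BA) \<odot> runit_inv) idm \<odot> dl X X Y)
          (tm idm (tm (gm Y) idm) \<odot> bmap (\<lambda>((a, b), (c, d)). (a, ((b, c), d)))
             \<odot> tm (coev BA) (dl X Y Y) \<odot> lunit_inv)) \<and>
     \<comment> \<open>(2)\<close>
     (\<forall>X\<in>Ob.
        eq_on (B X X \<times> BA)
          (tm idm mu \<odot> tm idm (tm (gm X) idm) \<odot> bmap (\<lambda>((a, b), (c, d)). (a, ((b, c), d)))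
             \<odot> tm (coev BA) idm \<odot> lunit_inv)
          (tm mu (gm X) \<odot> bmap (\<lambda>(a, ((b, d), c)). ((a, b), (d, c)))
             \<odot> tm idm (tm (coev BA) idm) \<odot> bmap (\<lambda>(a, c). (a, ((), c))) \<odot> psi X X)) \<and>
     \<comment> \<open>(3)\<close>
     (\<forall>X\<in>Ob.
        eq_on (B X X)
          (mu \<odot> tm idm (gm X) \<odot> assoc_lr \<odot> tm (coev BA) idm \<odot> lunit_inv)
          (u \<odot> ep X))"

end

theory Submission
  imports Defs
begin

text \<open>For an entwined module \<open>N\<close> let \<open>S : N \<rightarrow> N \<otimes> A\<close>, \<open>n \<mapsto> \<Sum>\<^sub>i n\<^sub>0 a\<^sub>i \<otimes> \<gamma>(a\<^sub>i\<^sup>* \<otimes> n\<^sub>1)\<close>.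
  The normalization (3) of the cointegral makes \<open>S\<close> a right inverse of the action
  \<open>N \<otimes> A \<rightarrow> N\<close>, axiom (2) makes \<open>S\<close> \<open>A\<close>-linear and axiom (1) makes it colinear, for the
  structures on \<open>N \<otimes> A\<close> induced by \<open>A\<close> and by the entwining. Hence for a colinear
  \<open>f : N \<rightarrow> M\<close> the average \<open>act\<^sub>M \<circ> (f \<otimes> A) \<circ> S\<close> is a morphism of \<open>Com\<^sup>C\<^sub>A(\<psi>)\<close>.
  Composing it on the left with an \<open>A\<close>-linear \<open>\<phi>\<close> gives \<open>act \<circ> (\<phi> f \<otimes> A) \<circ> S\<close>, and a morphism
  of \<open>Com\<^sup>C\<^sub>A(\<psi>)\<close> on the right passes through \<open>S\<close> by naturality; so averaging a colinear
  section (retraction) of \<open>\<phi>\<close> gives a section (retraction) in \<open>Com\<^sup>C\<^sub>A(\<psi>)\<close>.\<close>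

section \<open>Linear maps in the basis encoding\<close>

lemma lookup_sm [simp]: "Poly_Mapping.lookup (sm c v) x = c * Poly_Mapping.lookup v x"
  by (simp add: sm_def Poly_Mapping.map.rep_eq when_def)

lemma lookup_app:
  "Poly_Mapping.lookup (app f v) x =
     (\<Sum>b\<in>Poly_Mapping.keys v. Poly_Mapping.lookup v b * Poly_Mapping.lookup (f b) x)"
  by (simp add: app_def lookup_sum)

lemma lookup_app_superset:
  assumes "finite S" "Poly_Mapping.keys v \<subseteq> S"
  shows "Poly_Mapping.lookup (app f v) x =
    (\<Sum>b\<in>S. Poly_Mapping.lookup v b * Poly_Mapping.lookup (f b) x)"
  unfolding lookup_app
  by (rule sum.mono_neutral_left) (use assms in \<open>auto simp: in_keys_iff\<close>)

lemma app_add: "app f (v + w) = app f v + app f w"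
proof (rule poly_mapping_eqI)
  fix x
  let ?S = "Poly_Mapping.keys v \<union> Poly_Mapping.keys w"
  have "Poly_Mapping.keys (v + w) \<subseteq> ?S" by (rule keys_add)
  then show "Poly_Mapping.lookup (app f (v + w)) x = Poly_Mapping.lookup (app f v + app f w) x"
    by (simp add: lookup_add lookup_app_superset[of ?S] sum.distrib distrib_right)
qed

lemma app_sm: "app f (sm c v) = sm c (app f v)"
proof (rule poly_mapping_eqI)
  fix x
  have "Poly_Mapping.keys (sm c v) \<subseteq> Poly_Mapping.keys v"
    by (auto simp: in_keys_iff)
  then have "Poly_Mapping.lookup (app f (sm c v)) x =
      (\<Sum>b\<in>Poly_Mapping.keys v. Poly_Mapping.lookup (sm c v) b * Poly_Mapping.lookup (f b) x)"
    by (rule lookup_app_superset[rotated]) simp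
  then show "Poly_Mapping.lookup (app f (sm c v)) x = Poly_Mapping.lookup (sm c (app f v)) x"
    by (simp add: lookup_app sum_distrib_left mult.assoc)
qed

lemma app_single_one [simp]: "app f (Poly_Mapping.single b 1) = f b"
  by (rule poly_mapping_eqI) (simp add: lookup_app_superset[of "{b}"])

lemma app_zero [simp]: "app f 0 = 0"
  by (simp add: app_def)

lemma app_sum: "app f (sum g S) = (\<Sum>s\<in>S. app f (g s))"
  by (induction S rule: infinite_finite_induct) (auto simp: app_add)

lemma app_cmp: "app (g \<odot> f) v = app g (app f v)"
proof -
  have "app (g \<odot> f) v = (\<Sum>b\<in>Poly_Mapping.keys v. sm (Poly_Mapping.lookup v b) (app g (f b)))"
    by (unfold app_def[of "g \<odot> f" v]) (simp add: cmp_def)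
  then show ?thesis
    by (simp add: app_def[of f] app_sum app_sm)
qed

lemma cmp_apply: "(g \<odot> f) b = app g (f b)"
  by (simp add: cmp_def)

lemma cmp_assoc: "(h \<odot> g) \<odot> f = h \<odot> (g \<odot> f)"
  by (rule ext) (simp only: cmp_apply app_cmp)

lemma app_idm [simp]: "app idm v = v"
  by (rule poly_mapping_eqI)
     (simp add: lookup_app idm_def lookup_single when_def in_keys_iff if_distrib sum.delta cong: if_cong)

lemma cmp_idm [simp]: "f \<odot> idm = f"
  by (simp add: cmp_def idm_def fun_eq_iff)

lemma idm_cmp [simp]: "idm \<odot> f = f"
  by (simp add: cmp_def fun_eq_iff)

lemma lookup_tv:
  "Poly_Mapping.lookup (tv v w) (a, b) = Poly_Mapping.lookup v a * Poly_Mapping.lookup w b"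
proof -
  have "Poly_Mapping.lookup (tv v w) (a, b) =
      (\<Sum>a'\<in>Poly_Mapping.keys v. \<Sum>b'\<in>Poly_Mapping.keys w.
         Poly_Mapping.lookup v a' * Poly_Mapping.lookup w b' when (a', b') = (a, b))"
    by (simp add: tv_def lookup_sum lookup_single)
  also have "\<dots> = (\<Sum>a'\<in>Poly_Mapping.keys v. if a' = a then
      (\<Sum>b'\<in>Poly_Mapping.keys w. if b' = b then Poly_Mapping.lookup v a * Poly_Mapping.lookup w b' else 0)
      else 0)"
    by (intro sum.cong) (auto simp: when_def)
  finally show ?thesis
    by (simp add: in_keys_iff)
qed

lemma lookup_tv_pair:
  "Poly_Mapping.lookup (tv v w) k = Poly_Mapping.lookup v (fst k) * Poly_Mapping.lookup w (snd k)"
  by (cases k) (simp add: lookup_tv)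

lemma keys_tv: "Poly_Mapping.keys (tv v w) \<subseteq> Poly_Mapping.keys v \<times> Poly_Mapping.keys w"
  by (auto simp: in_keys_iff lookup_tv)

lemma tv_sum_left: "tv (sum g S) w = (\<Sum>s\<in>S. tv (g s) w)"
  by (rule poly_mapping_eqI) (simp add: lookup_tv_pair lookup_sum sum_distrib_right)

lemma tv_sum_right: "tv w (sum g S) = (\<Sum>s\<in>S. tv w (g s))"
  by (rule poly_mapping_eqI) (simp add: lookup_tv_pair lookup_sum sum_distrib_left)

lemma tv_single_single [simp]:
  "tv (Poly_Mapping.single a c) (Poly_Mapping.single b d) = Poly_Mapping.single (a, b) (c * d)"
  by (rule poly_mapping_eqI) (auto simp: lookup_tv_pair lookup_single when_def)

lemma tm_apply: "tm f g (a, b) = tv (f a) (g b)"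
  by (simp add: tm_def)

lemma app_tm_tv: "app (tm f g) (tv v w) = tv (app f v) (app g w)"
proof (rule poly_mapping_eqI)
  fix x :: "'a \<times> 'b"
  obtain c d where x: "x = (c, d)" by (cases x)
  have "Poly_Mapping.lookup (app (tm f g) (tv v w)) (c, d) =
      (\<Sum>k\<in>Poly_Mapping.keys v \<times> Poly_Mapping.keys w.
         Poly_Mapping.lookup (tv v w) k * Poly_Mapping.lookup (tm f g k) (c, d))"
    by (rule lookup_app_superset[OF _ keys_tv]) simp
  also have "\<dots> = (\<Sum>(a, b)\<in>Poly_Mapping.keys v \<times> Poly_Mapping.keys w.
      (Poly_Mapping.lookup v a * Poly_Mapping.lookup (f a) c) *
      (Poly_Mapping.lookup w b * Poly_Mapping.lookup (g b) d))"
    by (rule sum.cong) (auto simp: lookup_tv tm_apply mult_ac)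
  also have "\<dots> = Poly_Mapping.lookup (tv (app f v) (app g w)) (c, d)"
    by (simp add: sum.cartesian_product[symmetric] lookup_tv lookup_app sum_product mult_ac)
  finally show "Poly_Mapping.lookup (app (tm f g) (tv v w)) x =
      Poly_Mapping.lookup (tv (app f v) (app g w)) x"
    by (simp add: x)
qed

lemma tm_cmp: "tm f1 g1 \<odot> tm f2 g2 = tm (f1 \<odot> f2) (g1 \<odot> g2)"
  by (rule ext) (auto simp: cmp_apply tm_apply app_tm_tv)

lemma tm_idm [simp]: "tm idm idm = idm"
  by (simp add: fun_eq_iff idm_def tm_def)

lemma tm_cmp_left: "tm (f \<odot> g) idm = tm f idm \<odot> tm g idm"
  by (simp add: tm_cmp)

lemma tm_cmp_right: "tm idm (f \<odot> g) = tm idm f \<odot> tm idm g"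
  by (simp add: tm_cmp)

section \<open>The structural isomorphisms\<close>

lemma bmap_apply: "bmap p b = Poly_Mapping.single (p b) 1"
  by (simp add: bmap_def)

lemma idm_apply: "idm b = Poly_Mapping.single b 1"
  by (simp add: idm_def)

lemma bmap_cmp: "bmap q \<odot> bmap p = bmap (q \<circ> p)"
  by (rule ext) (simp add: cmp_apply bmap_apply)

lemma idm_bmap: "idm = bmap id"
  by (simp add: idm_def bmap_def fun_eq_iff)

lemma app_bmap_eqI:
  assumes "bij p" "\<And>k. Poly_Mapping.lookup W (p k) = Poly_Mapping.lookup V k"
  shows "app (bmap p) V = W"
proof (rule poly_mapping_eqI)
  fix y
  obtain k where y: "y = p k"
    using bij_is_surj[OF assms(1)] by blast
  have "Poly_Mapping.lookup (app (bmap p) V) (p k) =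
      (\<Sum>b\<in>Poly_Mapping.keys V. Poly_Mapping.lookup V b * (1 when p b = p k))"
    by (simp add: lookup_app bmap_apply lookup_single)
  also have "\<dots> = (\<Sum>b\<in>Poly_Mapping.keys V. if b = k then Poly_Mapping.lookup V b else 0)"
    using bij_is_inj[OF assms(1)] by (intro sum.cong) (auto simp: when_def inj_eq)
  finally show "Poly_Mapping.lookup (app (bmap p) V) y = Poly_Mapping.lookup W y"
    by (simp add: y assms(2) in_keys_iff)
qed

lemma app_assoc_lr_tv: "app assoc_lr (tv (tv x y) z) = tv x (tv y z)"
  by (rule app_bmap_eqI) (auto simp: bij_def inj_def surj_def lookup_tv)

lemma app_assoc_rl_tv: "app assoc_rl (tv x (tv y z)) = tv (tv x y) z"
  by (rule app_bmap_eqI) (auto simp: bij_def inj_def surj_def lookup_tv)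

lemma app_lunit_inv: "app lunit_inv v = tv (Poly_Mapping.single () 1) v"
  by (rule app_bmap_eqI) (auto simp: bij_def inj_def surj_def lookup_tv)

lemmas structure_eval_simps =
  cmp_apply bmap_apply tm_apply idm_apply app_tm_tv app_assoc_rl_tv app_assoc_lr_tv

lemma assoc_lr_natural: "assoc_lr \<odot> tm (tm f g) h = tm f (tm g h) \<odot> assoc_lr"
  by (rule ext) (auto simp: structure_eval_simps)

lemma assoc_rl_natural: "assoc_rl \<odot> tm f (tm g h) = tm (tm f g) h \<odot> assoc_rl"
  by (rule ext) (auto simp: structure_eval_simps)

lemma assoc_lr_rl: "assoc_lr \<odot> assoc_rl = idm"
  by (simp add: bmap_cmp idm_bmap comp_def case_prod_beta id_def)

lemma lunit_inv_natural: "lunit_inv \<odot> f = tm idm f \<odot> lunit_inv"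
  by (rule ext) (auto simp: cmp_apply bmap_apply tm_apply idm_apply app_lunit_inv)

lemma runit_inv_runit: "runit_inv \<odot> (runit :: 'b \<times> unit \<Rightarrow> _) = idm"
proof -
  have "(\<lambda>x::'b \<times> unit. (fst x, ())) = id" by (auto simp: fun_eq_iff)
  then show ?thesis by (simp add: bmap_cmp idm_bmap comp_def)
qed

lemma assoc_pentagon_lr: "tm assoc_lr idm \<odot> assoc_rl \<odot> assoc_rl = assoc_rl \<odot> tm idm assoc_rl"
  by (rule ext) (clarsimp simp: split_paired_all structure_eval_simps)

lemma assoc_pentagon_rl: "assoc_lr \<odot> tm assoc_rl idm \<odot> assoc_rl = assoc_rl \<odot> tm idm assoc_lr"
  by (rule ext) (clarsimp simp: split_paired_all structure_eval_simps)

lemma tm_cmp_cmp: "tm f1 g1 \<odot> (tm f2 g2 \<odot> h) = tm (f1 \<odot> f2) (g1 \<odot> g2) \<odot> h"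
  by (simp add: tm_cmp flip: cmp_assoc)

lemma tm_cmp_left_cmp: "tm f idm \<odot> (tm g idm \<odot> h) = tm (f \<odot> g) idm \<odot> h"
  by (simp add: tm_cmp_cmp)

lemma tm_interchange_cmp: "tm idm g \<odot> (tm f idm \<odot> h) = tm f idm \<odot> (tm idm g \<odot> h)"
  by (simp add: tm_cmp_cmp)

lemma assoc_lr_rl_cmp: "assoc_lr \<odot> (assoc_rl \<odot> h) = h"
  by (simp add: assoc_lr_rl flip: cmp_assoc)

lemma runit_inv_runit_cmp: "runit_inv \<odot> ((runit :: 'b \<times> unit \<Rightarrow> _) \<odot> h) = h"
  by (simp add: runit_inv_runit flip: cmp_assoc)

lemma assoc_lr_natural_cmp: "assoc_lr \<odot> (tm (tm f g) k \<odot> h) = tm f (tm g k) \<odot> (assoc_lr \<odot> h)"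
  by (simp add: assoc_lr_natural flip: cmp_assoc)

lemma assoc_rl_natural_cmp: "assoc_rl \<odot> (tm f (tm g k) \<odot> h) = tm (tm f g) k \<odot> (assoc_rl \<odot> h)"
  by (simp add: assoc_rl_natural flip: cmp_assoc)

lemma assoc_lr_natural_left_cmp: "assoc_lr \<odot> (tm (tm f idm) idm \<odot> h) = tm f idm \<odot> (assoc_lr \<odot> h)"
  using assoc_lr_natural_cmp[of f idm idm h] by simp

lemma assoc_rl_natural_left_cmp: "assoc_rl \<odot> (tm f idm \<odot> h) = tm (tm f idm) idm \<odot> (assoc_rl \<odot> h)"
  using assoc_rl_natural_cmp[of f idm idm h] by simp

lemma assoc_rl_natural_right_cmp: "assoc_rl \<odot> (tm idm (tm idm f) \<odot> h) = tm idm f \<odot> (assoc_rl \<odot> h)"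
  using assoc_rl_natural_cmp[of idm idm f h] by simp

lemma assoc_pentagon_lr_cmp:
  "tm assoc_lr idm \<odot> (assoc_rl \<odot> (assoc_rl \<odot> h)) = assoc_rl \<odot> (tm idm assoc_rl \<odot> h)"
  using arg_cong[OF assoc_pentagon_lr, of "\<lambda>k. k \<odot> h"] by (simp only: cmp_assoc)

lemma assoc_pentagon_rl_cmp:
  "assoc_lr \<odot> (tm assoc_rl idm \<odot> (assoc_rl \<odot> h)) = assoc_rl \<odot> (tm idm assoc_lr \<odot> h)"
  using arg_cong[OF assoc_pentagon_rl, of "\<lambda>k. k \<odot> h"] by (simp only: cmp_assoc)

lemma rearrange_mult_inward:
  "tm (F \<odot> tm idm m \<odot> assoc_lr) idm \<odot> assoc_rl \<odot> tm idm d \<odot> assoc_rl \<odot> tm idm p \<odot> r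
   = tm F idm \<odot> assoc_rl \<odot> tm idm (tm m idm \<odot> assoc_rl \<odot> tm idm d \<odot> p) \<odot> r"
proof -
  have core: "tm (F \<odot> tm idm m \<odot> assoc_lr) idm \<odot> assoc_rl \<odot> assoc_rl
      = tm F idm \<odot> assoc_rl \<odot> tm idm (tm m idm) \<odot> tm idm assoc_rl"
    by (rule ext) (clarsimp simp: split_paired_all structure_eval_simps)
  have "tm (F \<odot> tm idm m \<odot> assoc_lr) idm \<odot> assoc_rl \<odot> tm idm d \<odot> assoc_rl \<odot> tm idm p \<odot> r
     = (tm (F \<odot> tm idm m \<odot> assoc_lr) idm \<odot> assoc_rl \<odot> assoc_rl) \<odot> tm idm (tm idm d) \<odot> tm idm p \<odot> r"
    by (simp only: cmp_assoc assoc_rl_natural_right_cmp)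
  also have "\<dots> = tm F idm \<odot> assoc_rl \<odot> tm idm (tm m idm \<odot> assoc_rl \<odot> tm idm d \<odot> p) \<odot> r"
    by (simp only: core cmp_assoc tm_cmp_right)
  finally show ?thesis .
qed

lemma rearrange_mult_outward:
  "tm F idm \<odot> assoc_rl \<odot> tm idm (tm idm m \<odot> assoc_lr \<odot> tm d idm) \<odot> assoc_lr \<odot> r
   = tm F idm \<odot> tm idm m \<odot> assoc_lr \<odot> tm assoc_rl idm \<odot> tm (tm idm d) idm \<odot> r"
proof -
  have core: "tm F idm \<odot> assoc_rl \<odot> tm idm (tm idm m \<odot> assoc_lr) \<odot> assoc_lr
      = tm F idm \<odot> tm idm m \<odot> assoc_lr \<odot> tm assoc_rl idm"
    by (rule ext) (clarsimp simp: split_paired_all structure_eval_simps)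
  have "tm F idm \<odot> assoc_rl \<odot> tm idm (tm idm m \<odot> assoc_lr \<odot> tm d idm) \<odot> assoc_lr \<odot> r
     = (tm F idm \<odot> assoc_rl \<odot> tm idm (tm idm m \<odot> assoc_lr) \<odot> assoc_lr) \<odot> tm (tm idm d) idm \<odot> r"
    by (simp only: cmp_assoc tm_cmp_right assoc_lr_natural_cmp[symmetric] tm_idm)
  also have "\<dots> = tm F idm \<odot> tm idm m \<odot> assoc_lr \<odot> tm assoc_rl idm \<odot> tm (tm idm d) idm \<odot> r"
    by (simp only: core cmp_assoc)
  finally show ?thesis .
qed

lemma rearrange_coassoc:
  "tm (Q \<odot> assoc_rl \<odot> tm idm d) idm \<odot> assoc_rl \<odot> tm idm e \<odot> r
   = tm Q idm \<odot> assoc_rl \<odot> assoc_rl \<odot> tm idm (assoc_lr \<odot> tm d idm \<odot> e) \<odot> r"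
proof -
  have core: "tm assoc_rl idm \<odot> assoc_rl = assoc_rl \<odot> assoc_rl \<odot> tm idm assoc_lr"
    by (rule ext) (clarsimp simp: split_paired_all structure_eval_simps)
  have "tm (Q \<odot> assoc_rl \<odot> tm idm d) idm \<odot> assoc_rl \<odot> tm idm e \<odot> r
     = tm Q idm \<odot> (tm assoc_rl idm \<odot> assoc_rl) \<odot> tm idm (tm d idm) \<odot> tm idm e \<odot> r"
    by (simp only: cmp_assoc tm_cmp_left assoc_rl_natural_cmp[symmetric])
  also have "\<dots> = tm Q idm \<odot> assoc_rl \<odot> assoc_rl \<odot> tm idm (assoc_lr \<odot> tm d idm \<odot> e) \<odot> r"
    by (simp only: core cmp_assoc tm_cmp_right)
  finally show ?thesis .
qed

lemma rearrange_twisted_coassoc: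
  "assoc_rl \<odot> tm idm p \<odot> assoc_lr \<odot> tm (tm n idm \<odot> assoc_rl \<odot> tm idm p \<odot> assoc_lr) idm
     \<odot> assoc_rl \<odot> tm idm d \<odot> assoc_rl \<odot> tm idm e \<odot> r
   = tm (tm n idm) idm \<odot> assoc_rl \<odot> assoc_rl
       \<odot> tm idm (tm idm p \<odot> assoc_lr \<odot> tm p idm \<odot> assoc_rl \<odot> tm idm d \<odot> e) \<odot> r"
proof -
  have "assoc_rl \<odot> tm idm p \<odot> assoc_lr \<odot> tm (tm n idm \<odot> assoc_rl \<odot> tm idm p \<odot> assoc_lr) idm
      \<odot> assoc_rl \<odot> tm idm d \<odot> assoc_rl \<odot> tm idm e \<odot> r
    = assoc_rl \<odot> tm idm p \<odot> assoc_lr \<odot> tm (tm n idm) idm \<odot> tm assoc_rl idm \<odot> tm (tm idm p) idm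
      \<odot> tm assoc_lr idm \<odot> assoc_rl \<odot> assoc_rl \<odot> tm idm (tm idm d) \<odot> tm idm e \<odot> r"
    by (simp only: cmp_assoc tm_cmp_left assoc_rl_natural_right_cmp)
  also have "\<dots> = assoc_rl \<odot> tm idm p \<odot> assoc_lr \<odot> tm (tm n idm) idm \<odot> tm assoc_rl idm
      \<odot> tm (tm idm p) idm \<odot> assoc_rl \<odot> tm idm assoc_rl \<odot> tm idm (tm idm d) \<odot> tm idm e \<odot> r"
    by (simp only: assoc_pentagon_lr_cmp)
  also have "\<dots> = assoc_rl \<odot> tm idm p \<odot> assoc_lr \<odot> tm (tm n idm) idm \<odot> tm assoc_rl idm
      \<odot> assoc_rl \<odot> tm idm (tm p idm) \<odot> tm idm assoc_rl \<odot> tm idm (tm idm d) \<odot> tm idm e \<odot> r"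
    by (simp only: assoc_rl_natural_cmp)
  also have "\<dots> = assoc_rl \<odot> tm n idm \<odot> tm idm p \<odot> assoc_lr \<odot> tm assoc_rl idm
      \<odot> assoc_rl \<odot> tm idm (tm p idm) \<odot> tm idm assoc_rl \<odot> tm idm (tm idm d) \<odot> tm idm e \<odot> r"
    by (simp only: assoc_lr_natural_left_cmp tm_interchange_cmp)
  also have "\<dots> = tm (tm n idm) idm \<odot> assoc_rl \<odot> assoc_rl \<odot> tm idm (tm idm p) \<odot> tm idm assoc_lr
      \<odot> tm idm (tm p idm) \<odot> tm idm assoc_rl \<odot> tm idm (tm idm d) \<odot> tm idm e \<odot> r"
    by (simp only: assoc_rl_natural_left_cmp assoc_rl_natural_right_cmp assoc_pentagon_rl_cmp)
  also have "\<dots> = tm (tm n idm) idm \<odot> assoc_rl \<odot> assoc_rl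
      \<odot> tm idm (tm idm p \<odot> assoc_lr \<odot> tm p idm \<odot> assoc_rl \<odot> tm idm d \<odot> e) \<odot> r"
    by (simp only: cmp_assoc tm_cmp_right)
  finally show ?thesis .
qed

lemma keys_app: "Poly_Mapping.keys (app f v) \<subseteq> (\<Union>b\<in>Poly_Mapping.keys v. Poly_Mapping.keys (f b))"
proof
  fix x assume x: "x \<in> Poly_Mapping.keys (app f v)"
  show "x \<in> (\<Union>b\<in>Poly_Mapping.keys v. Poly_Mapping.keys (f b))"
  proof (rule ccontr)
    assume "x \<notin> (\<Union>b\<in>Poly_Mapping.keys v. Poly_Mapping.keys (f b))"
    then have "Poly_Mapping.lookup (app f v) x = 0"
      by (auto simp: lookup_app in_keys_iff intro!: sum.neutral)
    with x show False by (simp add: in_keys_iff)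
  qed
qed

lemma maps_to_cmp: "maps_to S T f \<Longrightarrow> maps_to T U g \<Longrightarrow> maps_to S U (g \<odot> f)"
  using keys_app by (fastforce simp: maps_to_def cmp_apply)

lemma maps_to_tm: "maps_to S T f \<Longrightarrow> maps_to S' T' g \<Longrightarrow> maps_to (S \<times> S') (T \<times> T') (tm f g)"
  using keys_tv by (fastforce simp: maps_to_def tm_apply)

lemma maps_to_idm: "maps_to S S idm"
  by (simp add: maps_to_def idm_apply)

lemma maps_to_UNIV: "maps_to S UNIV f"
  by (simp add: maps_to_def)

lemma maps_to_bmap: "p ` S \<subseteq> T \<Longrightarrow> maps_to S T (bmap p)"
  by (auto simp: maps_to_def bmap_apply)

lemma maps_to_assoc_lr: "maps_to ((A \<times> B) \<times> C) (A \<times> (B \<times> C)) assoc_lr"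
  by (rule maps_to_bmap) auto

lemma maps_to_assoc_rl: "maps_to (A \<times> (B \<times> C)) ((A \<times> B) \<times> C) assoc_rl"
  by (rule maps_to_bmap) auto

lemma maps_to_lunit_inv: "maps_to A (UNIV \<times> A) lunit_inv"
  by (rule maps_to_bmap) auto

lemma maps_to_runit: "maps_to (A \<times> U) A runit"
  by (rule maps_to_bmap) auto

lemma maps_to_coev: "maps_to S (BA \<times> BA) (coev BA)"
proof -
  have "Poly_Mapping.keys (\<Sum>a\<in>BA. Poly_Mapping.single (a, a) (1::'k::field)) \<subseteq> BA \<times> BA"
    by (rule order_trans[OF keys_sum]) auto
  then show ?thesis
    by (auto simp: maps_to_def coev_def)
qed

lemma eq_on_app: "eq_on S f g \<Longrightarrow> Poly_Mapping.keys v \<subseteq> S \<Longrightarrow> app f v = app g v"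
  unfolding app_def eq_on_def by (intro sum.cong) auto

lemma eq_on_cmp_right: "eq_on T f g \<Longrightarrow> maps_to S T h \<Longrightarrow> eq_on S (f \<odot> h) (g \<odot> h)"
  by (simp add: eq_on_def[of S] maps_to_def cmp_apply eq_on_app)

lemma eq_on_cmp_left: "eq_on S f g \<Longrightarrow> eq_on S (h \<odot> f) (h \<odot> g)"
  by (auto simp: eq_on_def cmp_apply)

lemma eq_on_tm: "eq_on S f f' \<Longrightarrow> eq_on T g g' \<Longrightarrow> eq_on (S \<times> T) (tm f g) (tm f' g')"
  by (auto simp: eq_on_def tm_apply)

lemma eq_on_refl: "eq_on S f f"
  by (simp add: eq_on_def)

lemma eq_on_sym: "eq_on S f g \<Longrightarrow> eq_on S g f"
  by (simp add: eq_on_def)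

lemma eq_on_trans [trans]: "eq_on S f g \<Longrightarrow> eq_on S g h \<Longrightarrow> eq_on S f h"
  by (simp add: eq_on_def)

lemma eq_on_eq_trans [trans]: "eq_on S f g \<Longrightarrow> g = h \<Longrightarrow> eq_on S f h"
  by simp

lemma eq_eq_on_trans [trans]: "f = g \<Longrightarrow> eq_on S g h \<Longrightarrow> eq_on S f h"
  by simp

text \<open>The compatibility axiom of an entwined
  module says that the action \<open>M \<otimes> A \<rightarrow> M\<close> is colinear for it.\<close>

definition tensor_coaction ::
  "('o \<Rightarrow> 'o \<Rightarrow> 'c \<times> 'a \<Rightarrow> ('a \<times> 'c \<Rightarrow>\<^sub>0 'k::field)) \<Rightarrow> ('o \<Rightarrow> 'o \<Rightarrow> 'm \<Rightarrow> ('m \<times> 'c \<Rightarrow>\<^sub>0 'k))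
    \<Rightarrow> 'o \<Rightarrow> 'o \<Rightarrow> 'm \<times> 'a \<Rightarrow> (('m \<times> 'a) \<times> 'c \<Rightarrow>\<^sub>0 'k)" where
  "tensor_coaction psi rho X Y = assoc_rl \<odot> tm idm (psi X Y) \<odot> assoc_lr \<odot> tm (rho X Y) idm"

lemma tensor_coaction_natural:
  assumes "eq_on S (tm g idm \<odot> rho' X Y) (rho X Y \<odot> f)"
  shows "eq_on (S \<times> T) (tensor_coaction psi rho X Y \<odot> tm f idm)
           (tm (tm g idm) idm \<odot> tensor_coaction psi rho' X Y)"
proof -
  have "tensor_coaction psi rho X Y \<odot> tm f idm
      = assoc_rl \<odot> tm idm (psi X Y) \<odot> assoc_lr \<odot> tm (rho X Y \<odot> f) idm"
    by (simp only: tensor_coaction_def cmp_assoc tm_cmp idm_cmp)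
  also have "eq_on (S \<times> T) \<dots> (assoc_rl \<odot> tm idm (psi X Y) \<odot> assoc_lr \<odot> tm (tm g idm \<odot> rho' X Y) idm)"
    by (intro eq_on_cmp_left eq_on_tm eq_on_sym[OF assms] eq_on_refl)
  also have "\<dots> = tm (tm g idm) idm \<odot> tensor_coaction psi rho' X Y"
    by (simp only: tensor_coaction_def cmp_assoc tm_cmp_left assoc_lr_natural_left_cmp
        tm_interchange_cmp assoc_rl_natural_left_cmp)
  finally show ?thesis .
qed

context
  fixes Ob B dl ep BA mu u psi BM rho act
  assumes M: "entwined_module Ob B dl ep BA mu u psi BM rho act"
begin

lemma entwined_module_coaction_maps_to:
  "X \<in> Ob \<Longrightarrow> Y \<in> Ob \<Longrightarrow> maps_to (BM X) (BM Y \<times> B X Y) (rho X Y)"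
  using M by (simp add: entwined_module_def comodule_def)

lemma entwined_module_coassoc:
  "X \<in> Ob \<Longrightarrow> Y \<in> Ob \<Longrightarrow> Z \<in> Ob \<Longrightarrow>
    eq_on (BM X) (tm (rho Z Y) idm \<odot> rho X Z) (assoc_rl \<odot> tm idm (dl X Z Y) \<odot> rho X Y)"
  using M by (simp add: entwined_module_def comodule_def)

lemma entwined_module_counit: "X \<in> Ob \<Longrightarrow> eq_on (BM X) (runit \<odot> tm idm (ep X) \<odot> rho X X) idm"
  using M by (simp add: entwined_module_def comodule_def)

lemma entwined_module_act_maps_to: "X \<in> Ob \<Longrightarrow> maps_to (BM X \<times> BA) (BM X) (act X)"
  using M by (simp add: entwined_module_def)

lemma entwined_module_act_assoc:
  "X \<in> Ob \<Longrightarrow> eq_on ((BM X \<times> BA) \<times> BA) (act X \<odot> tm (act X) idm) (act X \<odot> tm idm mu \<odot> assoc_lr)"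
  using M by (simp add: entwined_module_def)

lemma entwined_module_act_unit: "X \<in> Ob \<Longrightarrow> eq_on (BM X) (act X \<odot> tm idm u \<odot> runit_inv) idm"
  using M by (simp add: entwined_module_def)

lemma entwined_module_act_colinear:
  "X \<in> Ob \<Longrightarrow> Y \<in> Ob \<Longrightarrow>
    eq_on (BM X \<times> BA) (rho X Y \<odot> act X) (tm (act Y) idm \<odot> tensor_coaction psi rho X Y)"
  using M by (simp add: entwined_module_def tensor_coaction_def)

end

section \<open>The splitting defined by a normalized cointegral\<close>

locale entwining_cointegral =
  fixes Ob :: "'o set" and B :: "'o \<Rightarrow> 'o \<Rightarrow> 'c set"
    and dl :: "'o \<Rightarrow> 'o \<Rightarrow> 'o \<Rightarrow> 'c \<Rightarrow> ('c \<times> 'c \<Rightarrow>\<^sub>0 'k::field)"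
    and ep :: "'o \<Rightarrow> 'c \<Rightarrow> (unit \<Rightarrow>\<^sub>0 'k)"
    and BA :: "'a set" and mu :: "'a \<times> 'a \<Rightarrow> ('a \<Rightarrow>\<^sub>0 'k)" and u :: "unit \<Rightarrow> ('a \<Rightarrow>\<^sub>0 'k)"
    and psi :: "'o \<Rightarrow> 'o \<Rightarrow> 'c \<times> 'a \<Rightarrow> ('a \<times> 'c \<Rightarrow>\<^sub>0 'k)"
    and gm :: "'o \<Rightarrow> 'a \<times> 'c \<Rightarrow> ('a \<Rightarrow>\<^sub>0 'k)"
  assumes entwining: "entwining Ob B dl ep BA mu u psi"
    and cointegral: "normalized_cointegral Ob B dl ep BA mu u psi gm"
begin

lemma mult_maps_to: "maps_to (BA \<times> BA) BA mu"
  using entwining by (simp add: entwining_def k_algebra_def)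

lemma psi_maps_to: "X \<in> Ob \<Longrightarrow> Y \<in> Ob \<Longrightarrow> maps_to (B X Y \<times> BA) (BA \<times> B X Y) (psi X Y)"
  using entwining by (simp add: entwining_def)

lemma gamma_maps_to: "X \<in> Ob \<Longrightarrow> maps_to (BA \<times> B X X) BA (gm X)"
  using cointegral by (simp add: normalized_cointegral_def)

definition gamma_tensor :: "'o \<Rightarrow> 'c \<Rightarrow> ('a \<times> 'a \<Rightarrow>\<^sub>0 'k)" where
  "gamma_tensor X = tm idm (gm X) \<odot> assoc_lr \<odot> tm (coev BA) idm \<odot> lunit_inv"

lemma gamma_tensor_apply:
  "gamma_tensor X c = (\<Sum>a\<in>BA. tv (Poly_Mapping.single a 1) (gm X (a, c)))"
  by (simp add: gamma_tensor_def cmp_apply bmap_apply tm_apply coev_def tv_sum_left app_sum idm_apply)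

lemma gamma_tensor_maps_to: "X \<in> Ob \<Longrightarrow> maps_to (B X X) (BA \<times> BA) (gamma_tensor X)"
  unfolding gamma_tensor_def
  by (rule maps_to_cmp maps_to_tm maps_to_idm maps_to_assoc_lr maps_to_lunit_inv maps_to_coev
      gamma_maps_to)+

lemmas maps_to_rules = maps_to_cmp maps_to_tm maps_to_idm maps_to_UNIV maps_to_assoc_lr
  maps_to_assoc_rl maps_to_lunit_inv maps_to_runit gamma_tensor_maps_to mult_maps_to psi_maps_to

lemma gamma_tensor_colinear:
  assumes X: "X \<in> Ob" and Y: "Y \<in> Ob"
  shows "eq_on (B X Y)
    (tm idm (psi X Y) \<odot> assoc_lr \<odot> tm (psi X Y) idm \<odot> assoc_rl \<odot> tm idm (gamma_tensor X) \<odot> dl X X Y)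
    (assoc_lr \<odot> tm (gamma_tensor Y) idm \<odot> dl X Y Y)"
proof -
  have axiom: "eq_on (B X Y)
      (tm idm (psi X Y) \<odot> assoc_lr \<odot> tm (psi X Y) (gm X) \<odot> bmap (\<lambda>((c, (a, b)), d). ((c, a), (b, d)))
         \<odot> tm (tm idm (coev BA) \<odot> runit_inv) idm \<odot> dl X X Y)
      (tm idm (tm (gm Y) idm) \<odot> bmap (\<lambda>((a, b), (c, d)). (a, ((b, c), d)))
         \<odot> tm (coev BA) (dl X Y Y) \<odot> lunit_inv)"
    using cointegral X Y by (simp add: normalized_cointegral_def)
  have "tm (psi X Y) (gm X) \<odot> bmap (\<lambda>((c, (a, b)), d). ((c, a), (b, d)))
      \<odot> tm (tm idm (coev BA) \<odot> runit_inv) idm = tm (psi X Y) idm \<odot> assoc_rl \<odot> tm idm (gamma_tensor X)"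
    by (rule ext) (auto simp: structure_eval_simps coev_def tv_sum_left tv_sum_right app_sum
        gamma_tensor_apply)
  from arg_cong[OF this, of "\<lambda>h. h \<odot> dl X X Y"]
  have left: "tm (psi X Y) (gm X) \<odot> bmap (\<lambda>((c, (a, b)), d). ((c, a), (b, d)))
      \<odot> tm (tm idm (coev BA) \<odot> runit_inv) idm \<odot> dl X X Y
      = tm (psi X Y) idm \<odot> assoc_rl \<odot> tm idm (gamma_tensor X) \<odot> dl X X Y"
    by (simp only: cmp_assoc)
  have "tm idm (tm (gm Y) idm) \<odot> bmap (\<lambda>((a, b), (c, d)). (a, ((b, c), d)))
      \<odot> tm (coev BA) idm \<odot> lunit_inv = assoc_lr \<odot> tm (gamma_tensor Y) idm"
    by (rule ext) (auto simp: structure_eval_simps coev_def tv_sum_left app_sum gamma_tensor_apply)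
  from arg_cong[OF this, of "\<lambda>h. h \<odot> dl X Y Y"]
  have right: "tm idm (tm (gm Y) idm) \<odot> bmap (\<lambda>((a, b), (c, d)). (a, ((b, c), d)))
      \<odot> tm (coev BA) idm \<odot> lunit_inv \<odot> dl X Y Y = assoc_lr \<odot> tm (gamma_tensor Y) idm \<odot> dl X Y Y"
    by (simp only: cmp_assoc)
  have "tm (coev BA) (dl X Y Y) \<odot> lunit_inv = tm (coev BA) idm \<odot> lunit_inv \<odot> dl X Y Y"
    by (simp add: lunit_inv_natural tm_cmp_cmp)
  with axiom show ?thesis
    by (simp only: left right)
qed

lemma gamma_tensor_mult:
  assumes X: "X \<in> Ob"
  shows "eq_on (B X X \<times> BA) (tm idm mu \<odot> assoc_lr \<odot> tm (gamma_tensor X) idm)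
    (tm mu idm \<odot> assoc_rl \<odot> tm idm (gamma_tensor X) \<odot> psi X X)"
proof -
  have axiom: "eq_on (B X X \<times> BA)
      (tm idm mu \<odot> tm idm (tm (gm X) idm) \<odot> bmap (\<lambda>((a, b), (c, d)). (a, ((b, c), d)))
         \<odot> tm (coev BA) idm \<odot> lunit_inv)
      (tm mu (gm X) \<odot> bmap (\<lambda>(a, ((b, d), c)). ((a, b), (d, c)))
         \<odot> tm idm (tm (coev BA) idm) \<odot> bmap (\<lambda>(a, c). (a, ((), c))) \<odot> psi X X)"
    using cointegral X by (simp add: normalized_cointegral_def)
  have left: "tm idm (tm (gm X) idm) \<odot> bmap (\<lambda>((a, b), (c, d)). (a, ((b, c), d)))
      \<odot> tm (coev BA) idm \<odot> lunit_inv = assoc_lr \<odot> tm (gamma_tensor X) idm"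
    by (rule ext) (auto simp: structure_eval_simps coev_def tv_sum_left app_sum gamma_tensor_apply)
  have "tm mu (gm X) \<odot> bmap (\<lambda>(a, ((b, d), c)). ((a, b), (d, c)))
      \<odot> tm idm (tm (coev BA) idm) \<odot> bmap (\<lambda>(a, c). (a, ((), c)))
      = tm mu idm \<odot> assoc_rl \<odot> tm idm (gamma_tensor X)"
    by (rule ext) (auto simp: structure_eval_simps coev_def tv_sum_left tv_sum_right app_sum
        gamma_tensor_apply)
  from arg_cong[OF this, of "\<lambda>h. h \<odot> psi X X"]
  have right: "tm mu (gm X) \<odot> bmap (\<lambda>(a, ((b, d), c)). ((a, b), (d, c)))
      \<odot> tm idm (tm (coev BA) idm) \<odot> bmap (\<lambda>(a, c). (a, ((), c))) \<odot> psi X X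
      = tm mu idm \<odot> assoc_rl \<odot> tm idm (gamma_tensor X) \<odot> psi X X"
    by (simp only: cmp_assoc)
  from axiom show ?thesis
    by (simp only: left right)
qed

lemma mult_gamma_tensor: "X \<in> Ob \<Longrightarrow> eq_on (B X X) (mu \<odot> gamma_tensor X) (u \<odot> ep X)"
  using cointegral by (simp add: normalized_cointegral_def gamma_tensor_def)

definition splitting ::
  "('o \<Rightarrow> 'o \<Rightarrow> 'n \<Rightarrow> ('n \<times> 'c \<Rightarrow>\<^sub>0 'k)) \<Rightarrow> ('o \<Rightarrow> 'n \<times> 'a \<Rightarrow> ('n \<Rightarrow>\<^sub>0 'k)) \<Rightarrow> 'o \<Rightarrow> 'n \<Rightarrow> ('n \<times> 'a \<Rightarrow>\<^sub>0 'k)"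
  where "splitting rho act X = tm (act X) idm \<odot> assoc_rl \<odot> tm idm (gamma_tensor X) \<odot> rho X X"

context
  fixes BN rhoN actN
  assumes N: "entwined_module Ob B dl ep BA mu u psi BN rhoN actN"
begin

lemmas module_maps_to_rules = maps_to_rules
  entwined_module_coaction_maps_to[OF N] entwined_module_act_maps_to[OF N]

lemma tensor_coaction_maps_to:
  "X \<in> Ob \<Longrightarrow> Y \<in> Ob \<Longrightarrow> maps_to (BN X \<times> BA) ((BN Y \<times> BA) \<times> B X Y) (tensor_coaction psi rhoN X Y)"
  unfolding tensor_coaction_def by (rule module_maps_to_rules | assumption)+

lemma splitting_maps_to: "X \<in> Ob \<Longrightarrow> maps_to (BN X) (BN X \<times> BA) (splitting rhoN actN X)"
  unfolding splitting_def by (rule module_maps_to_rules | assumption)+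

lemma act_splitting:
  assumes X: "X \<in> Ob"
  shows "eq_on (BN X) (actN X \<odot> splitting rhoN actN X) idm"
proof -
  let ?a = "actN X" and ?R = "assoc_rl \<odot> tm idm (gamma_tensor X) \<odot> rhoN X X"
  have "?a \<odot> splitting rhoN actN X = (?a \<odot> tm ?a idm) \<odot> ?R"
    by (simp add: splitting_def cmp_assoc)
  also have "eq_on (BN X) \<dots> ((?a \<odot> tm idm mu \<odot> assoc_lr) \<odot> ?R)"
    by (rule eq_on_cmp_right[OF entwined_module_act_assoc[OF N X]])
       (rule module_maps_to_rules X)+
  also have "(?a \<odot> tm idm mu \<odot> assoc_lr) \<odot> ?R = ?a \<odot> tm idm (mu \<odot> gamma_tensor X) \<odot> rhoN X X"
    by (simp add: cmp_assoc assoc_lr_rl_cmp tm_cmp_cmp)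
  also have "eq_on (BN X) \<dots> (?a \<odot> tm idm (u \<odot> ep X) \<odot> rhoN X X)"
    by (intro eq_on_cmp_left eq_on_cmp_right[OF eq_on_tm[OF eq_on_refl mult_gamma_tensor[OF X]]])
       (rule module_maps_to_rules X)+
  also have "?a \<odot> tm idm (u \<odot> ep X) \<odot> rhoN X X
      = (?a \<odot> tm idm u \<odot> runit_inv) \<odot> (runit \<odot> tm idm (ep X) \<odot> rhoN X X)"
    by (simp only: tm_cmp_right cmp_assoc runit_inv_runit_cmp)
  also have "eq_on (BN X) \<dots> (idm \<odot> (runit \<odot> tm idm (ep X) \<odot> rhoN X X))"
    by (rule eq_on_cmp_right[OF entwined_module_act_unit[OF N X]]) (rule module_maps_to_rules X)+
  also have "eq_on (BN X) \<dots> idm"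
    using entwined_module_counit[OF N X] by simp
  finally show ?thesis .
qed

lemma splitting_act:
  assumes X: "X \<in> Ob"
  shows "eq_on (BN X \<times> BA) (splitting rhoN actN X \<odot> actN X)
           (tm idm mu \<odot> assoc_lr \<odot> tm (splitting rhoN actN X) idm)"
proof -
  let ?a = "actN X" and ?D = "gamma_tensor X" and ?T = "tensor_coaction psi rhoN X X"
  have "splitting rhoN actN X \<odot> ?a = (tm ?a idm \<odot> assoc_rl \<odot> tm idm ?D) \<odot> (rhoN X X \<odot> ?a)"
    by (simp only: splitting_def cmp_assoc)
  also have "eq_on (BN X \<times> BA) \<dots> ((tm ?a idm \<odot> assoc_rl \<odot> tm idm ?D) \<odot> (tm ?a idm \<odot> ?T))"
    by (rule eq_on_cmp_left[OF entwined_module_act_colinear[OF N X X]])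
  also have "\<dots> = tm (?a \<odot> tm ?a idm) idm \<odot> (assoc_rl \<odot> tm idm ?D \<odot> ?T)"
    by (simp only: cmp_assoc tm_interchange_cmp assoc_rl_natural_left_cmp tm_cmp_left_cmp)
  also have "eq_on (BN X \<times> BA) \<dots> (tm (?a \<odot> tm idm mu \<odot> assoc_lr) idm \<odot> (assoc_rl \<odot> tm idm ?D \<odot> ?T))"
    by (rule eq_on_cmp_right[OF eq_on_tm[OF entwined_module_act_assoc[OF N X] eq_on_refl]])
       (rule module_maps_to_rules tensor_coaction_maps_to X)+
  also have "\<dots> = tm ?a idm \<odot> assoc_rl \<odot> tm idm (tm mu idm \<odot> assoc_rl \<odot> tm idm ?D \<odot> psi X X)
      \<odot> assoc_lr \<odot> tm (rhoN X X) idm"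
    by (simp only: tensor_coaction_def cmp_assoc rearrange_mult_inward)
  also have "eq_on (BN X \<times> BA) \<dots> (tm ?a idm \<odot> assoc_rl \<odot> tm idm (tm idm mu \<odot> assoc_lr \<odot> tm ?D idm)
      \<odot> assoc_lr \<odot> tm (rhoN X X) idm)"
    by (intro eq_on_cmp_left,
        rule eq_on_cmp_right[OF eq_on_tm[OF eq_on_refl eq_on_sym[OF gamma_tensor_mult[OF X]]]])
       (rule module_maps_to_rules X)+
  also have "\<dots> = tm idm mu \<odot> assoc_lr \<odot> tm (splitting rhoN actN X) idm"
    by (simp only: rearrange_mult_outward splitting_def tm_cmp_left cmp_assoc tm_interchange_cmp
        assoc_lr_natural_left_cmp)
  finally show ?thesis .
qed

lemma splitting_colinear:
  assumes X: "X \<in> Ob" and Y: "Y \<in> Ob"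
  shows "eq_on (BN X) (tensor_coaction psi rhoN X Y \<odot> splitting rhoN actN X)
           (tm (splitting rhoN actN Y) idm \<odot> rhoN X Y)"
proof -
  let ?p = "psi X Y" and ?a = "actN Y" and ?DX = "gamma_tensor X" and ?DY = "gamma_tensor Y"
  let ?P = "assoc_rl \<odot> tm idm ?p \<odot> assoc_lr"
  let ?E = "?P \<odot> tm (tm ?a idm \<odot> ?P) idm \<odot> assoc_rl \<odot> tm idm ?DX"
  let ?Q = "tm (tm ?a idm) idm \<odot> assoc_rl \<odot> assoc_rl"
  have "tensor_coaction psi rhoN X Y \<odot> splitting rhoN actN X
      = ?P \<odot> (tm (rhoN X Y \<odot> actN X) idm \<odot> (assoc_rl \<odot> tm idm ?DX \<odot> rhoN X X))"
    by (simp only: tensor_coaction_def splitting_def cmp_assoc tm_cmp_left_cmp)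
  also have "eq_on (BN X) \<dots> (?P \<odot> (tm (tm ?a idm \<odot> tensor_coaction psi rhoN X Y) idm
      \<odot> (assoc_rl \<odot> tm idm ?DX \<odot> rhoN X X)))"
    by (rule eq_on_cmp_left,
        rule eq_on_cmp_right[OF eq_on_tm[OF entwined_module_act_colinear[OF N X Y] eq_on_refl]])
       (rule module_maps_to_rules X)+
  also have "\<dots> = ?E \<odot> (tm (rhoN X Y) idm \<odot> rhoN X X)"
    by (simp only: tensor_coaction_def cmp_assoc tm_interchange_cmp assoc_rl_natural_left_cmp
        tm_cmp_left_cmp)
  also have "eq_on (BN X) \<dots> (?E \<odot> (assoc_rl \<odot> tm idm (dl X X Y) \<odot> rhoN X Y))"
    by (rule eq_on_cmp_left[OF entwined_module_coassoc[OF N X Y X]])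
  also have "\<dots> = ?Q \<odot> (tm idm (tm idm ?p \<odot> assoc_lr \<odot> tm ?p idm \<odot> assoc_rl \<odot> tm idm ?DX \<odot> dl X X Y)
      \<odot> rhoN X Y)"
    by (simp only: rearrange_twisted_coassoc cmp_assoc)
  also have "eq_on (BN X) \<dots> (?Q \<odot> (tm idm (assoc_lr \<odot> tm ?DY idm \<odot> dl X Y Y) \<odot> rhoN X Y))"
    by (rule eq_on_cmp_left,
        rule eq_on_cmp_right[OF eq_on_tm[OF eq_on_refl gamma_tensor_colinear[OF X Y]]])
       (rule module_maps_to_rules X Y)+
  also have "\<dots> = tm (tm ?a idm \<odot> assoc_rl \<odot> tm idm ?DY) idm \<odot> (assoc_rl \<odot> tm idm (dl X Y Y) \<odot> rhoN X Y)"
    by (simp only: rearrange_coassoc cmp_assoc)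
  also have "eq_on (BN X) \<dots> (tm (tm ?a idm \<odot> assoc_rl \<odot> tm idm ?DY) idm \<odot> (tm (rhoN Y Y) idm \<odot> rhoN X Y))"
    by (rule eq_on_cmp_left[OF eq_on_sym[OF entwined_module_coassoc[OF N X Y Y]]])
  also have "\<dots> = tm (splitting rhoN actN Y) idm \<odot> rhoN X Y"
    by (simp only: splitting_def tm_cmp_left cmp_assoc)
  finally show ?thesis .
qed

end

lemma splitting_natural:
  assumes N': "entwined_module Ob B dl ep BA mu u psi BN' rho' act'"
    and h: "entwined_mor Ob B BA BN' rho' act' BN rhoN actN h" and X: "X \<in> Ob"
  shows "eq_on (BN' X) (splitting rhoN actN X \<odot> h X) (tm (h X) idm \<odot> splitting rho' act' X)"
proof -
  have colinear: "eq_on (BN' X) (tm (h X) idm \<odot> rho' X X) (rhoN X X \<odot> h X)"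
    and linear: "eq_on (BN' X \<times> BA) (h X \<odot> act' X) (actN X \<odot> tm (h X) idm)"
    using h X by (auto simp: entwined_mor_def comodule_mor_def)
  let ?R = "assoc_rl \<odot> tm idm (gamma_tensor X)"
  have "splitting rhoN actN X \<odot> h X = (tm (actN X) idm \<odot> ?R) \<odot> (rhoN X X \<odot> h X)"
    by (simp only: splitting_def cmp_assoc)
  also have "eq_on (BN' X) \<dots> ((tm (actN X) idm \<odot> ?R) \<odot> (tm (h X) idm \<odot> rho' X X))"
    by (rule eq_on_cmp_left[OF eq_on_sym[OF colinear]])
  also have "\<dots> = tm (actN X \<odot> tm (h X) idm) idm \<odot> (?R \<odot> rho' X X)"
    by (simp only: cmp_assoc tm_interchange_cmp assoc_rl_natural_left_cmp tm_cmp_left_cmp)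
  also have "eq_on (BN' X) \<dots> (tm (h X \<odot> act' X) idm \<odot> (?R \<odot> rho' X X))"
    by (rule eq_on_cmp_right[OF eq_on_tm[OF eq_on_sym[OF linear] eq_on_refl]])
       (rule module_maps_to_rules[OF N'] X)+
  also have "\<dots> = tm (h X) idm \<odot> splitting rho' act' X"
    by (simp only: splitting_def tm_cmp_left cmp_assoc)
  finally show ?thesis .
qed

section \<open>Averaging colinear maps\<close>

definition average ::
  "('o \<Rightarrow> 'm \<times> 'a \<Rightarrow> ('m \<Rightarrow>\<^sub>0 'k)) \<Rightarrow> ('o \<Rightarrow> 'o \<Rightarrow> 'n \<Rightarrow> ('n \<times> 'c \<Rightarrow>\<^sub>0 'k))
    \<Rightarrow> ('o \<Rightarrow> 'n \<times> 'a \<Rightarrow> ('n \<Rightarrow>\<^sub>0 'k)) \<Rightarrow> ('o \<Rightarrow> 'n \<Rightarrow> ('m \<Rightarrow>\<^sub>0 'k)) \<Rightarrow> 'o \<Rightarrow> 'n \<Rightarrow> ('m \<Rightarrow>\<^sub>0 'k)"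
  where "average act rho' act' f X = act X \<odot> tm (f X) idm \<odot> splitting rho' act' X"

context
  fixes BM rho act BN rhoN actN
  assumes M: "entwined_module Ob B dl ep BA mu u psi BM rho act"
    and N: "entwined_module Ob B dl ep BA mu u psi BN rhoN actN"
begin

lemma average_act_linear:
  assumes f: "maps_to (BN X) (BM X) (f X)" and X: "X \<in> Ob"
  shows "eq_on (BN X \<times> BA) (average act rhoN actN f X \<odot> actN X)
           (act X \<odot> tm (average act rhoN actN f X) idm)"
proof -
  let ?S = "splitting rhoN actN X"
  have "average act rhoN actN f X \<odot> actN X = act X \<odot> tm (f X) idm \<odot> (?S \<odot> actN X)"
    by (simp only: average_def cmp_assoc)
  also have "eq_on (BN X \<times> BA) \<dots> (act X \<odot> tm (f X) idm \<odot> (tm idm mu \<odot> assoc_lr \<odot> tm ?S idm))"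
    by (intro eq_on_cmp_left splitting_act[OF N X])
  also have "\<dots> = (act X \<odot> tm idm mu \<odot> assoc_lr) \<odot> tm (tm (f X) idm \<odot> ?S) idm"
    by (simp only: cmp_assoc tm_cmp_left assoc_lr_natural_left_cmp tm_interchange_cmp)
  also have "eq_on (BN X \<times> BA) \<dots> ((act X \<odot> tm (act X) idm) \<odot> tm (tm (f X) idm \<odot> ?S) idm)"
    by (rule eq_on_cmp_right[OF eq_on_sym[OF entwined_module_act_assoc[OF M X]]])
       (rule maps_to_rules splitting_maps_to[OF N X] f)+
  also have "\<dots> = act X \<odot> tm (average act rhoN actN f X) idm"
    by (simp only: average_def tm_cmp_left cmp_assoc)
  finally show ?thesis .
qed

lemma average_colinear:
  assumes f: "comodule_mor Ob B BN rhoN BM rho f" and X: "X \<in> Ob" and Y: "Y \<in> Ob"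
  shows "eq_on (BN X) (tm (average act rhoN actN f Y) idm \<odot> rhoN X Y)
           (rho X Y \<odot> average act rhoN actN f X)"
proof -
  have f_maps_to: "maps_to (BN X) (BM X) (f X)"
    and f_colinear: "eq_on (BN X) (tm (f Y) idm \<odot> rhoN X Y) (rho X Y \<odot> f X)"
    using f X Y by (auto simp: comodule_mor_def)
  let ?S = "splitting rhoN actN"
  have "rho X Y \<odot> average act rhoN actN f X = (rho X Y \<odot> act X) \<odot> (tm (f X) idm \<odot> ?S X)"
    by (simp only: average_def cmp_assoc)
  also have "eq_on (BN X) \<dots> ((tm (act Y) idm \<odot> tensor_coaction psi rho X Y) \<odot> (tm (f X) idm \<odot> ?S X))"
    by (rule eq_on_cmp_right[OF entwined_module_act_colinear[OF M X Y]])
       (rule maps_to_rules splitting_maps_to[OF N X] f_maps_to)+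
  also have "\<dots> = tm (act Y) idm \<odot> ((tensor_coaction psi rho X Y \<odot> tm (f X) idm) \<odot> ?S X)"
    by (simp only: cmp_assoc)
  also have "eq_on (BN X) \<dots>
      (tm (act Y) idm \<odot> ((tm (tm (f Y) idm) idm \<odot> tensor_coaction psi rhoN X Y) \<odot> ?S X))"
    by (rule eq_on_cmp_left,
        rule eq_on_cmp_right[OF tensor_coaction_natural[where rho = rho and rho' = rhoN, OF f_colinear]])
       (rule splitting_maps_to[OF N X])
  also have "\<dots> = (tm (act Y) idm \<odot> tm (tm (f Y) idm) idm) \<odot> (tensor_coaction psi rhoN X Y \<odot> ?S X)"
    by (simp only: cmp_assoc)
  also have "eq_on (BN X) \<dots> ((tm (act Y) idm \<odot> tm (tm (f Y) idm) idm) \<odot> (tm (?S Y) idm \<odot> rhoN X Y))"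
    by (rule eq_on_cmp_left[OF splitting_colinear[OF N X Y]])
  also have "\<dots> = tm (average act rhoN actN f Y) idm \<odot> rhoN X Y"
    by (simp only: average_def tm_cmp_left cmp_assoc)
  finally show ?thesis
    by (rule eq_on_sym)
qed

lemma average_entwined_mor:
  assumes "comodule_mor Ob B BN rhoN BM rho f"
  shows "entwined_mor Ob B BA BN rhoN actN BM rho act (average act rhoN actN f)"
proof -
  have f: "\<And>X. X \<in> Ob \<Longrightarrow> maps_to (BN X) (BM X) (f X)"
    using assms by (simp add: comodule_mor_def)
  have "maps_to (BN X) (BM X) (average act rhoN actN f X)" if "X \<in> Ob" for X
    unfolding average_def
    by (rule maps_to_rules entwined_module_act_maps_to[OF M] splitting_maps_to[OF N] f that)+
  moreover have "eq_on (BN X \<times> BA) (average act rhoN actN f X \<odot> actN X)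
      (act X \<odot> tm (average act rhoN actN f X) idm)" if "X \<in> Ob" for X
    by (rule average_act_linear[where f = f, OF f[OF that] that])
  ultimately show ?thesis
    using average_colinear[OF assms] by (simp add: entwined_mor_def comodule_mor_def)
qed

end

lemma average_section:
  assumes N: "entwined_module Ob B dl ep BA mu u psi BN rhoN actN"
    and phi: "entwined_mor Ob B BA BM rho act BN rhoN actN phi"
    and s: "\<And>X. X \<in> Ob \<Longrightarrow> maps_to (BN X) (BM X) (s X)"
    and s_section: "is_section_of Ob BN s phi"
  shows "is_section_of Ob BN (average act rhoN actN s) phi"
  unfolding is_section_of_def
proof
  fix X assume X: "X \<in> Ob"
  let ?S = "splitting rhoN actN X"
  have "phi X \<odot> average act rhoN actN s X = (phi X \<odot> act X) \<odot> (tm (s X) idm \<odot> ?S)"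
    by (simp only: average_def cmp_assoc)
  also have "eq_on (BN X) \<dots> ((actN X \<odot> tm (phi X) idm) \<odot> (tm (s X) idm \<odot> ?S))"
    using phi X unfolding entwined_mor_def
    by (intro eq_on_cmp_right) (auto intro: maps_to_rules splitting_maps_to[OF N X] s)
  also have "\<dots> = actN X \<odot> tm (phi X \<odot> s X) idm \<odot> ?S"
    by (simp only: cmp_assoc tm_cmp_left_cmp)
  also have "eq_on (BN X) \<dots> (actN X \<odot> tm idm idm \<odot> ?S)"
  proof -
    have "eq_on (BN X \<times> BA) (tm (phi X \<odot> s X) idm) (tm idm idm)"
      using s_section X by (intro eq_on_tm eq_on_refl) (simp add: is_section_of_def)
    then show ?thesis
      by (rule eq_on_cmp_left[OF eq_on_cmp_right[OF _ splitting_maps_to[OF N X]]])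
  qed
  also have "eq_on (BN X) \<dots> idm"
    using act_splitting[OF N X] by simp
  finally show "eq_on (BN X) (phi X \<odot> average act rhoN actN s X) idm" .
qed

lemma average_retraction:
  assumes M: "entwined_module Ob B dl ep BA mu u psi BM rho act"
    and phi: "entwined_mor Ob B BA BM rho act BN rhoN actN phi"
    and r_retraction: "is_retraction_of Ob BM r phi"
  shows "is_retraction_of Ob BM (average act rhoN actN r) phi"
  unfolding is_retraction_of_def
proof
  fix X assume X: "X \<in> Ob"
  let ?S = "splitting rho act X"
  have "average act rhoN actN r X \<odot> phi X = act X \<odot> tm (r X) idm \<odot> (splitting rhoN actN X \<odot> phi X)"
    by (simp only: average_def cmp_assoc)
  also have "eq_on (BM X) \<dots> (act X \<odot> tm (r X) idm \<odot> (tm (phi X) idm \<odot> ?S))"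
    by (intro eq_on_cmp_left splitting_natural[OF M phi X])
  also have "\<dots> = act X \<odot> tm (r X \<odot> phi X) idm \<odot> ?S"
    by (simp only: tm_cmp_left_cmp)
  also have "eq_on (BM X) \<dots> (act X \<odot> tm idm idm \<odot> ?S)"
  proof -
    have "eq_on (BM X \<times> BA) (tm (r X \<odot> phi X) idm) (tm idm idm)"
      using r_retraction X by (intro eq_on_tm eq_on_refl) (simp add: is_retraction_of_def)
    then show ?thesis
      by (rule eq_on_cmp_left[OF eq_on_cmp_right[OF _ splitting_maps_to[OF M X]]])
  qed
  also have "eq_on (BM X) \<dots> idm"
    using act_splitting[OF M X] by simp
  finally show "eq_on (BM X) (average act rhoN actN r X \<odot> phi X) idm" .
qed

end

theorem proposition7p7:
  fixes Ob :: "'o set" and B :: "'o \<Rightarrow> 'o \<Rightarrow> 'c set"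
    and dl :: "'o \<Rightarrow> 'o \<Rightarrow> 'o \<Rightarrow> 'c \<Rightarrow> ('c \<times> 'c \<Rightarrow>\<^sub>0 'k::field)"
    and ep :: "'o \<Rightarrow> 'c \<Rightarrow> (unit \<Rightarrow>\<^sub>0 'k)"
    and BA :: "'a set" and mu :: "'a \<times> 'a \<Rightarrow> ('a \<Rightarrow>\<^sub>0 'k)" and u :: "unit \<Rightarrow> ('a \<Rightarrow>\<^sub>0 'k)"
    and psi :: "'o \<Rightarrow> 'o \<Rightarrow> 'c \<times> 'a \<Rightarrow> ('a \<times> 'c \<Rightarrow>\<^sub>0 'k)"
    and BM :: "'o \<Rightarrow> 'm set" and rho :: "'o \<Rightarrow> 'o \<Rightarrow> 'm \<Rightarrow> ('m \<times> 'c \<Rightarrow>\<^sub>0 'k)"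
    and act :: "'o \<Rightarrow> 'm \<times> 'a \<Rightarrow> ('m \<Rightarrow>\<^sub>0 'k)"
    and BN :: "'o \<Rightarrow> 'n set" and rho' :: "'o \<Rightarrow> 'o \<Rightarrow> 'n \<Rightarrow> ('n \<times> 'c \<Rightarrow>\<^sub>0 'k)"
    and act' :: "'o \<Rightarrow> 'n \<times> 'a \<Rightarrow> ('n \<Rightarrow>\<^sub>0 'k)"
    and phi :: "'o \<Rightarrow> 'm \<Rightarrow> ('n \<Rightarrow>\<^sub>0 'k)"
  assumes ent: "entwining Ob B dl ep BA mu u psi"
    and fin: "finite BA"
    and coint: "\<exists>gm. normalized_cointegral Ob B dl ep BA mu u psi gm"
    and M: "entwined_module Ob B dl ep BA mu u psi BM rho act"
    and M': "entwined_module Ob B dl ep BA mu u psi BN rho' act'"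
    and phi: "entwined_mor Ob B BA BM rho act BN rho' act' phi"
  shows "((\<exists>sigma. entwined_mor Ob B BA BN rho' act' BM rho act sigma \<and> is_section_of Ob BN sigma phi)
            \<longleftrightarrow> (\<exists>sigma. comodule_mor Ob B BN rho' BM rho sigma \<and> is_section_of Ob BN sigma phi))
       \<and> ((\<exists>r. entwined_mor Ob B BA BN rho' act' BM rho act r \<and> is_retraction_of Ob BM r phi)
            \<longleftrightarrow> (\<exists>r. comodule_mor Ob B BN rho' BM rho r \<and> is_retraction_of Ob BM r phi))"
proof -
  obtain gm where "normalized_cointegral Ob B dl ep BA mu u psi gm"
    using coint by blast
  with ent interpret entwining_cointegral Ob B dl ep BA mu u psi gm
    by unfold_locales
  have forget: "comodule_mor Ob B BN rho' BM rho f"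
    if "entwined_mor Ob B BA BN rho' act' BM rho act f" for f
    using that by (simp add: entwined_mor_def)
  have average: "entwined_mor Ob B BA BN rho' act' BM rho act (average act rho' act' f)"
    and colinear_maps_to: "\<And>X. X \<in> Ob \<Longrightarrow> maps_to (BN X) (BM X) (f X)"
    if "comodule_mor Ob B BN rho' BM rho f" for f
    using that average_entwined_mor[OF M M'] by (auto simp: comodule_mor_def)
  show ?thesis
    using forget average average_section[OF M' phi colinear_maps_to] average_retraction[OF M phi]
    by meson
qed

end
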